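(* Let $d$ be the discriminant of a real quadratic field and $p$ an odd prime not dividing $d$. Then $$\prod_{0<c<d/2}(-1)^{\lfloor pc/d\rfloor(\frac dc)}=\Big(\frac dp\Big)^{[d=8\text{ or } d\text{ is prime}]}.$$
   Context: $(\frac d{\cdot})$ is the Kronecker symbol (so $(\frac dc)=0$ when $\gcd(c,d)>1$); $\lfloor x\rfloor$ is the integer part. For an assertion $P$, $[P]=1$ if $P$ holds and $[P]=0$ otherwise. *)

theory Defs
  imports "HOL-Number_Theory.Number_Theory" "HOL-Computational_Algebra.Squarefree"
begin

definition kronecker_prime :: "int \<Rightarrow> int \<Rightarrow> int" where
  "kronecker_prime d p =
     (if p = 2 then (if even d then 0 else if d mod 8 = 1 \<or> d mod 8 = 7 then 1 else -1)
      else Legendre d p)"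

definition kronecker :: "int \<Rightarrow> int \<Rightarrow> int" where
  "kronecker d n = (\<Prod>p\<in>#prime_factorization n. kronecker_prime d p)"

definition real_quad_disc :: "int \<Rightarrow> bool" where
  "real_quad_disc d \<longleftrightarrow> d > 1 \<and>
     ((d mod 4 = 1 \<and> squarefree d) \<or>
      (d mod 4 = 0 \<and> squarefree (d div 4) \<and> (d div 4) mod 4 \<in> {2, 3}))"

end

theory Submission
  imports Defs
begin

(*
  Let E be the sum of floor(p c / d) over the half system H(d) of residues 0 < c < d/2 prime
  to d. As (d/c) is odd for c prime to d and 0 otherwise, the left-hand side equals (-1)^E.

  For odd d, Gauss's proof of his lemma, run on H(d), gives p^(phi(d)/2) = (-1)^mu (mod d),
  where mu counts the c in H(d) with p c mod d > d/2, and Eisenstein's parity argument gives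
  E = mu (mod 2). For prime d this is Euler's criterion, and reciprocity (d = 1 mod 4) turns
  (p/d) into (d/p). For d = q r with coprime q, r > 2, phi(q) divides phi(d)/2, so (-1)^mu is
  1 modulo q and E is even.

  For d = 2 n with n even, pairing c with n - c gives E = (phi(n)/2)(p - 1)/2 - nu, where nu
  counts the c in H(n) with p c mod d > n. Twisting Gauss's argument by an odd real character
  psi modulo d with psi(n - x) = psi(x) gives psi(p)^(phi(n)/2) = (-1)^nu, hence
  (-1)^E = ((-1)^((p-1)/2) psi(p))^(phi(n)/2). For d = 4 m, psi = chi_-4 makes the base 1;
  for d = 8 k, psi = chi_-8 makes it (2/p), and phi(n)/2 = phi(k) is even unless d = 8,
  the one case where E is computed by hand.
*)

section \<open>Gauss's half system\<close>

definition half_totatives :: "int \<Rightarrow> int set" where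
  "half_totatives n = {c. 0 < c \<and> 2 * c < n \<and> coprime c n}"

definition residue_sign :: "int \<Rightarrow> int \<Rightarrow> int" where
  "residue_sign n x = (if n < 2 * (x mod n) then -1 else 1)"

definition abs_least_residue :: "int \<Rightarrow> int \<Rightarrow> int" where
  "abs_least_residue n x = (if n < 2 * (x mod n) then n - x mod n else x mod n)"

definition half_floor_sum :: "int \<Rightarrow> int \<Rightarrow> int" where
  "half_floor_sum n p = (\<Sum>c\<in>half_totatives n. (p * c) div n)"

lemma finite_half_totatives [simp]: "finite (half_totatives n)"
  by (rule finite_subset[of _ "{0..n}"]) (auto simp: half_totatives_def)

lemma coprime_diff_self_left_iff: "coprime (n - c) n \<longleftrightarrow> coprime (c::int) n"
  by (simp add: coprime_iff_gcd_eq_1 gcd_diff2)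

lemma coprime_imp_nonzero_and_not_half:
  fixes r n :: int
  assumes "coprime r n" "n > 2"
  shows "r \<noteq> 0 \<and> 2 * r \<noteq> n"
  using assms by (auto simp: coprime_mult_left_iff)

lemma abs_least_residue_in_half_totatives:
  assumes "coprime x n" "n > 2"
  shows "abs_least_residue n x \<in> half_totatives n"
proof -
  have "coprime (x mod n) n"
    using assms by (simp add: coprime_mod_left_iff)
  moreover from this have "0 < x mod n" "2 * (x mod n) \<noteq> n"
    using coprime_imp_nonzero_and_not_half[of "x mod n" n] assms(2)
    by (simp_all add: order_less_le)
  moreover have "x mod n < n"
    using assms by simp
  ultimately show ?thesis
    by (auto simp: abs_least_residue_def half_totatives_def coprime_diff_self_left_iff)
qed

lemma cong_residue_sign: "[x = residue_sign n x * abs_least_residue n x] (mod n)"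
proof -
  have "[x mod n = x] (mod n)" "[x mod n - n = x] (mod n)"
    by (simp_all add: cong_def mod_diff_left_eq[symmetric])
  then show ?thesis
    by (auto simp: residue_sign_def abs_least_residue_def cong_sym)
qed

lemma prod_residue_sign:
  "finite A \<Longrightarrow> (\<Prod>x\<in>A. residue_sign n (f x)) = (-1) ^ card {x\<in>A. n < 2 * (f x mod n)}"
  by (simp add: residue_sign_def prod.inter_filter[symmetric])

lemma half_totatives_cong_imp_eq:
  assumes "c \<in> half_totatives n" "c' \<in> half_totatives n"
    and "[c = c'] (mod n) \<or> [c = - c'] (mod n)"
  shows "c = c'"
  using assms(3)
proof
  assume "[c = c'] (mod n)"
  then show ?thesis
    using assms(1,2) by (simp add: half_totatives_def cong_def)
next
  assume "[c = - c'] (mod n)"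
  then have "n dvd c + c'"
    by (simp add: cong_iff_dvd_diff)
  moreover have "0 < c + c'" "c + c' < n"
    using assms(1,2) by (auto simp: half_totatives_def)
  ultimately show ?thesis
    using zdvd_not_zless by blast
qed

lemma abs_least_residue_eq_imp_cong:
  assumes "abs_least_residue n x = abs_least_residue n y"
  shows "[x = y] (mod n) \<or> [x = - y] (mod n)"
proof -
  let ?a = "abs_least_residue n y"
  have x: "[x = residue_sign n x * ?a] (mod n)" and y: "[y = residue_sign n y * ?a] (mod n)"
    using cong_residue_sign[of x n] cong_residue_sign[of y n] assms by simp_all
  consider "residue_sign n x = residue_sign n y" | "residue_sign n x = - residue_sign n y"
    unfolding residue_sign_def by (cases "n < 2 * (x mod n)"; cases "n < 2 * (y mod n)") simp_all
  then show ?thesis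
  proof cases
    case 1
    then show ?thesis using x y by (metis cong_sym cong_trans)
  next
    case 2
    then have "[x = - (residue_sign n y * ?a)] (mod n)" using x by simp
    moreover have "[- y = - (residue_sign n y * ?a)] (mod n)" using y by (simp add: cong_minus_minus_iff)
    ultimately show ?thesis by (metis cong_sym cong_trans)
  qed
qed

lemma bij_betw_abs_least_residue_mult:
  assumes "coprime p n" "n > 2"
  shows "bij_betw (\<lambda>c. abs_least_residue n (p * c)) (half_totatives n) (half_totatives n)"
proof -
  have "abs_least_residue n (p * c) \<in> half_totatives n" if "c \<in> half_totatives n" for c
    using that assms by (intro abs_least_residue_in_half_totatives) (auto simp: half_totatives_def)
  then have into: "(\<lambda>c. abs_least_residue n (p * c)) ` half_totatives n \<subseteq> half_totatives n"
    by blast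
  have "inj_on (\<lambda>c. abs_least_residue n (p * c)) (half_totatives n)"
  proof (rule inj_onI)
    fix c c'
    assume c: "c \<in> half_totatives n" "c' \<in> half_totatives n"
      and "abs_least_residue n (p * c) = abs_least_residue n (p * c')"
    then have "[p * c = p * c'] (mod n) \<or> [p * c = p * - c'] (mod n)"
      using abs_least_residue_eq_imp_cong by simp
    then have "[c = c'] (mod n) \<or> [c = - c'] (mod n)"
      using cong_mult_lcancel[OF assms(1)] by blast
    then show "c = c'"
      using half_totatives_cong_imp_eq c by blast
  qed
  then show ?thesis
    using endo_inj_surj[OF finite_half_totatives into] by (simp add: bij_betw_def)
qed

lemma totatives_reflect:
  assumes "n > 2"
  shows "{c. 0 < c \<and> c < n \<and> coprime c n} = half_totatives n \<union> (\<lambda>c. n - c) ` half_totatives n"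
    and "half_totatives n \<inter> (\<lambda>c. n - c) ` half_totatives n = {}"
proof -
  have "c \<in> (\<lambda>c. n - c) ` half_totatives n"
    if "0 < c" "c < n" "coprime c n" "\<not> 2 * c < n" for c
  proof
    show "c = n - (n - c)" by simp
    show "n - c \<in> half_totatives n"
      using that coprime_imp_nonzero_and_not_half[of c n] assms
      by (auto simp: half_totatives_def coprime_diff_self_left_iff)
  qed
  then show "{c. 0 < c \<and> c < n \<and> coprime c n} = half_totatives n \<union> (\<lambda>c. n - c) ` half_totatives n"
    by (auto simp: half_totatives_def coprime_diff_self_left_iff)
  show "half_totatives n \<inter> (\<lambda>c. n - c) ` half_totatives n = {}"
    by (auto simp: half_totatives_def)
qed

lemma totient_eq_card_int:
  assumes "n > 1"
  shows "totient (nat n) = card {c. 0 < c \<and> c < n \<and> coprime c n}"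
proof -
  define N where "N = nat n"
  have N: "n = int N" "N > 1"
    using assms by (simp_all add: N_def)
  have "int ` totatives N = {c. 0 < c \<and> c < int N \<and> coprime c (int N)}"
  proof (intro equalityI subsetI)
    fix c assume "c \<in> int ` totatives N"
    then obtain k where k: "k \<in> totatives N" "c = int k"
      by blast
    then show "c \<in> {c. 0 < c \<and> c < int N \<and> coprime c (int N)}"
      using totatives_less[OF k(1) N(2)] by (auto simp: in_totatives_iff)
  next
    fix c assume c: "c \<in> {c. 0 < c \<and> c < int N \<and> coprime c (int N)}"
    then have "coprime (nat c) N"
      by (metis coprime_int_iff int_nat_eq less_imp_le mem_Collect_eq)
    then have "nat c \<in> totatives N"
      using c by (auto simp: in_totatives_iff)
    then show "c \<in> int ` totatives N"
      using c by (auto intro: image_eqI[of _ _ "nat c"])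
  qed
  then show ?thesis
    unfolding totient_def N(1) by (metis card_image inj_on_of_nat nat_int)
qed

lemma card_half_totatives:
  assumes "n > 2"
  shows "2 * card (half_totatives n) = totient (nat n)"
proof -
  have "totient (nat n) = card (half_totatives n \<union> (\<lambda>c. n - c) ` half_totatives n)"
    using assms by (simp add: totient_eq_card_int totatives_reflect(1))
  also have "\<dots> = card (half_totatives n) + card ((\<lambda>c. n - c) ` half_totatives n)"
    using assms by (simp add: card_Un_disjoint totatives_reflect(2))
  also have "card ((\<lambda>c. n - c) ` half_totatives n) = card (half_totatives n)"
    by (simp add: card_image)
  finally show ?thesis
    by simp
qed

section \<open>Odd moduli\<close>

lemma cong_abs_le_1_imp_eq:
  fixes x y m :: int
  assumes "\<bar>x\<bar> \<le> 1" "\<bar>y\<bar> \<le> 1" "m > 2" "[x = y] (mod m)"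
  shows "x = y"
proof (rule ccontr)
  assume "x \<noteq> y"
  moreover have "m dvd x - y"
    using assms(4) by (simp add: cong_iff_dvd_diff)
  ultimately have "\<bar>m\<bar> \<le> \<bar>x - y\<bar>"
    by (intro dvd_imp_le_int) simp_all
  then show False
    using assms(1-3) by linarith
qed

lemma gauss_lemma_half_totatives:
  assumes "coprime p n" "n > 2"
  shows "[p ^ card (half_totatives n) =
          (-1) ^ card {c \<in> half_totatives n. n < 2 * ((p * c) mod n)}] (mod n)"
proof -
  let ?H = "half_totatives n"
  have "[(\<Prod>c\<in>?H. p * c) = (\<Prod>c\<in>?H. residue_sign n (p * c) * abs_least_residue n (p * c))] (mod n)"
    by (intro cong_prod cong_residue_sign)
  moreover have "(\<Prod>c\<in>?H. abs_least_residue n (p * c)) = (\<Prod>c\<in>?H. c)"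
    by (rule prod.reindex_bij_betw[OF bij_betw_abs_least_residue_mult[OF assms]])
  ultimately have "[p ^ card ?H * (\<Prod>c\<in>?H. c) =
              (-1) ^ card {c \<in> ?H. n < 2 * ((p * c) mod n)} * (\<Prod>c\<in>?H. c)] (mod n)"
    by (simp add: prod.distrib prod_residue_sign)
  moreover have "coprime (\<Prod>c\<in>?H. c) n"
    by (rule prod_coprime_left) (simp add: half_totatives_def)
  ultimately show ?thesis
    by (simp add: cong_mult_rcancel)
qed

lemma even_div_add_abs_least_residue:
  assumes "odd n"
  shows "even (x div n + abs_least_residue n x + of_bool (n < 2 * (x mod n)) + x)"
proof -
  have eq: "x div n + x mod n + x = (n + 1) * (x div n) + 2 * (x mod n)"
    using div_mult_mod_eq[of x n] by (simp add: algebra_simps)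
  have "even (x div n + x mod n + x)"
    unfolding eq using assms by simp
  moreover have "even (abs_least_residue n x + of_bool (n < 2 * (x mod n)) - x mod n)"
    using assms by (simp add: abs_least_residue_def)
  ultimately have "even ((x div n + x mod n + x) +
      (abs_least_residue n x + of_bool (n < 2 * (x mod n)) - x mod n))"
    by (rule dvd_add)
  then show ?thesis
    by (simp add: algebra_simps)
qed

lemma even_half_floor_sum_add_card:
  assumes "coprime p n" "n > 2" "odd n" "odd p"
  shows "even (half_floor_sum n p + int (card {c \<in> half_totatives n. n < 2 * ((p * c) mod n)}))"
proof -
  let ?H = "half_totatives n"
  have perm: "(\<Sum>c\<in>?H. abs_least_residue n (p * c)) = (\<Sum>c\<in>?H. c)"
    by (rule sum.reindex_bij_betw[OF bij_betw_abs_least_residue_mult[OF assms(1,2)]])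
  have "even (\<Sum>c\<in>?H. (p * c) div n + abs_least_residue n (p * c)
                         + of_bool (n < 2 * ((p * c) mod n)) + p * c)"
    using assms(3) by (intro dvd_sum even_div_add_abs_least_residue)
  also have "(\<Sum>c\<in>?H. (p * c) div n + abs_least_residue n (p * c)
                         + of_bool (n < 2 * ((p * c) mod n)) + p * c) =
      half_floor_sum n p + int (card {c \<in> ?H. n < 2 * ((p * c) mod n)}) + (p + 1) * (\<Sum>c\<in>?H. c)"
    by (simp add: sum.distrib half_floor_sum_def perm Int_def ring_distribs flip: sum_distrib_left)
  finally show ?thesis
    using assms(4) by simp
qed

lemma cong_pow_card_half_totatives:
  assumes "coprime p n" "n > 2" "odd n" "odd p"
  shows "[p ^ card (half_totatives n) = (if even (half_floor_sum n p) then 1 else -1)] (mod n)"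
proof -
  have "even (half_floor_sum n p) \<longleftrightarrow>
        even (card {c \<in> half_totatives n. n < 2 * ((p * c) mod n)})"
    using even_half_floor_sum_add_card[OF assms] by simp
  then show ?thesis
    using gauss_lemma_half_totatives[OF assms(1,2)] by (simp add: minus_one_power_iff)
qed

lemma even_half_floor_sum_coprime_factors:
  assumes "coprime p n" "odd n" "odd p" "n = q * r" "coprime q r" "q > 2" "r > 2"
  shows "even (half_floor_sum n p)"
proof -
  let ?k = "card (half_totatives n)" and ?sign = "if even (half_floor_sum n p) then 1 else -1 :: int"
  have "n > 2"
    using mult_strict_mono[of 1 q 2 r] assms(4,6,7) by simp
  have "even (totient (nat r))"
    using assms(7) by (intro totient_even) simp
  then obtain s where s: "totient (nat r) = 2 * s"
    by (rule evenE)
  have "2 * ?k = totient (nat q) * totient (nat r)"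
    using card_half_totatives[OF \<open>n > 2\<close>] assms(4-7)
    by (simp add: nat_mult_distrib totient_mult_coprime coprime_int_iff[symmetric])
  then have k: "?k = totient (nat q) * s"
    using s by simp
  have "coprime p q"
    using assms(1,4) by simp
  then have "[p ^ totient (nat q) = 1] (mod q)"
    using assms(6) by (intro residues.euler_theorem) (simp_all add: residues_def)
  then have "[p ^ ?k = 1] (mod q)"
    unfolding k power_mult using cong_pow by fastforce
  moreover have "[p ^ ?k = ?sign] (mod q)"
    using cong_pow_card_half_totatives[OF assms(1) \<open>n > 2\<close> assms(2,3)] assms(4)
    by (metis cong_dvd_modulus dvd_triv_left)
  ultimately have "[?sign = 1] (mod q)"
    by (metis cong_sym cong_trans)
  then have "?sign = 1"
    using assms(6) by (intro cong_abs_le_1_imp_eq) simp_all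
  then show ?thesis
    by (simp split: if_splits)
qed

lemma squarefree_nonprime_imp_coprime_factors:
  fixes n :: int
  assumes "squarefree n" "n > 1" "\<not> prime n"
  obtains q r where "prime q" "n = q * r" "r > 1" "coprime q r"
proof -
  obtain q where q: "prime q" "q dvd n"
    using assms(2) prime_divisor_exists[of n] by auto
  define r where "r = n div q"
  have n: "n = q * r"
    using q by (simp add: r_def)
  then have "r > 0"
    using assms(2) prime_gt_0_int[OF q(1)] zero_less_mult_pos[of q r] by simp
  moreover have "r \<noteq> 1"
    using n q(1) assms(3) by auto
  moreover have "coprime q r"
  proof (rule ccontr)
    assume "\<not> coprime q r"
    then have "q dvd r"
      using q(1) prime_imp_coprime by blast
    then have "q * q dvd n"
      using n by simp
    then show False
      using squarefreeD[OF assms(1), of q] q(1) by (auto simp: power2_eq_square)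
  qed
  ultimately show ?thesis
    using that q(1) n by simp
qed

lemma even_half_floor_sum_squarefree_nonprime:
  assumes "squarefree n" "odd n" "n > 1" "\<not> prime n" "coprime p n" "odd p"
  shows "even (half_floor_sum n p)"
proof -
  obtain q r where qr: "prime q" "n = q * r" "r > 1" "coprime q r"
    using squarefree_nonprime_imp_coprime_factors assms(1,3,4) by blast
  have "odd q" "odd r"
    using qr(2) assms(2) by simp_all
  then have "q > 2" "r > 2"
    using prime_ge_2_int[OF qr(1)] qr(3) by (auto elim!: oddE)
  show ?thesis
    using assms(5,2,6) qr(2,4) \<open>q > 2\<close> \<open>r > 2\<close> by (rule even_half_floor_sum_coprime_factors)
qed

section \<open>Even moduli\<close>

lemma div_add_div_complement:
  fixes n p x :: int
  assumes "odd p" "n > 0"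
  shows "x div (2 * n) + (p * n - x) div (2 * n) = (p - 1) div 2 - of_bool (2 * n < 2 * (x mod (2 * n)))"
proof -
  define d where "d = 2 * n"
  obtain t where t: "p = 2 * t + 1"
    using assms(1) oddE by blast
  have r: "0 \<le> x mod d" "x mod d < d"
    using assms(2) by (simp_all add: d_def)
  have "p * n - x = (n - x mod d + d) + (t - x div d - 1) * d"
    using div_mult_mod_eq[of x d] t by (simp add: d_def algebra_simps)
  then have "(p * n - x) div d = (n - x mod d + d) div d + (t - x div d - 1)"
    using assms(2) by (simp add: d_def)
  moreover have "(n - x mod d + d) div d = of_bool (\<not> n < x mod d)"
  proof (cases "n < x mod d")
    case True
    then show ?thesis
      using r by (simp add: d_def)
  next
    case False
    have "(n - x mod d + d) div d = (n - x mod d) div d + 1"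
      by (rule div_add_self2) (use assms(2) in \<open>simp add: d_def\<close>)
    then show ?thesis
      using False r by (simp add: d_def)
  qed
  ultimately show ?thesis
    using t by (simp add: d_def)
qed

lemma half_totatives_double:
  assumes "even n"
  shows "half_totatives (2 * n) = {c. 0 < c \<and> c < n \<and> coprime c n}"
proof -
  have "coprime c 2" if "coprime c n" for c
    using that assms by (metis coprime_common_divisor coprime_right_2_iff_odd odd_one)
  then show ?thesis
    by (auto simp: half_totatives_def coprime_mult_right_iff)
qed

lemma half_floor_sum_double:
  assumes "even n" "n > 2" "odd p"
  shows "half_floor_sum (2 * n) p = int (card (half_totatives n)) * ((p - 1) div 2)
           - int (card {c \<in> half_totatives n. 2 * n < 2 * ((p * c) mod (2 * n))})"
proof -
  let ?H = "half_totatives n" and ?f = "\<lambda>c. (p * c) div (2 * n)"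
  have "half_floor_sum (2 * n) p = sum ?f (?H \<union> (\<lambda>c. n - c) ` ?H)"
    using assms by (simp add: half_floor_sum_def half_totatives_double totatives_reflect(1))
  also have "\<dots> = (\<Sum>c\<in>?H. ?f c + ?f (n - c))"
    using assms by (simp add: sum.union_disjoint totatives_reflect(2) sum.reindex sum.distrib)
  also have "\<dots> = (\<Sum>c\<in>?H. (p - 1) div 2 - of_bool (2 * n < 2 * ((p * c) mod (2 * n))))"
    using div_add_div_complement[OF assms(3), of n] assms(2) by (simp add: right_diff_distrib)
  finally show ?thesis
    by (simp add: sum_subtractf Int_def)
qed

lemma character_residue_sign:
  fixes \<psi> :: "int \<Rightarrow> int"
  assumes "even n" "n > 0" "odd x"
    and periodic: "\<And>x. \<psi> (x mod (2 * n)) = \<psi> x"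
    and reflect: "\<And>x. odd x \<Longrightarrow> \<psi> (n - x) = \<psi> x"
    and odd_fun: "\<And>x. odd x \<Longrightarrow> \<psi> (- x) = - \<psi> x"
  shows "\<psi> (abs_least_residue n x) = residue_sign (2 * n) x * \<psi> x"
proof -
  define r where "r = x mod (2 * n)"
  have r: "odd r" "0 \<le> r" "r < 2 * n"
    using assms(1-3) by (simp_all add: r_def dvd_mod_iff)
  have "odd (x mod n)"
    using assms(1,3) by (simp add: dvd_mod_iff)
  then have abs: "\<psi> (abs_least_residue n x) = \<psi> (r mod n)"
    using reflect by (simp add: abs_least_residue_def r_def mod_mod_cancel)
  have "\<psi> x = \<psi> r"
    by (simp add: r_def periodic)
  consider "r < n" | "n < r"
    using r(1) assms(1) by (metis linorder_neqE)
  then show ?thesis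
  proof cases
    case 1
    then show ?thesis
      using abs r \<open>\<psi> x = \<psi> r\<close> by (simp add: residue_sign_def r_def)
  next
    case 2
    have "r mod n = (r - n) mod n"
      by (metis diff_add_cancel mod_add_self2)
    also have "\<dots> = - (n - r)"
      using 2 r by (subst mod_pos_pos_trivial) auto
    finally have "\<psi> (r mod n) = \<psi> (- (n - r))"
      by simp
    also have "\<dots> = - \<psi> (n - r)"
      using r(1) assms(1) by (intro odd_fun) simp
    also have "\<dots> = - \<psi> r"
      using r(1) reflect by simp
    finally have "\<psi> (r mod n) = - \<psi> r" .
    then show ?thesis
      using 2 abs \<open>\<psi> x = \<psi> r\<close> by (simp add: residue_sign_def r_def)
  qed
qed

lemma character_pow_card_half_totatives:
  fixes \<psi> :: "int \<Rightarrow> int"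
  assumes "even n" "n > 2" "coprime p (2 * n)"
    and mult: "\<And>x y. odd x \<Longrightarrow> odd y \<Longrightarrow> \<psi> (x * y) = \<psi> x * \<psi> y"
    and periodic: "\<And>x. \<psi> (x mod (2 * n)) = \<psi> x"
    and reflect: "\<And>x. odd x \<Longrightarrow> \<psi> (n - x) = \<psi> x"
    and odd_fun: "\<And>x. odd x \<Longrightarrow> \<psi> (- x) = - \<psi> x"
    and nonzero: "\<And>x. odd x \<Longrightarrow> \<psi> x \<noteq> 0"
  shows "\<psi> p ^ card (half_totatives n) =
           (-1) ^ card {c \<in> half_totatives n. 2 * n < 2 * ((p * c) mod (2 * n))}"
proof -
  let ?H = "half_totatives n" and ?\<nu> = "card {c \<in> half_totatives n. 2 * n < 2 * ((p * c) mod (2 * n))}"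
  have "odd p" "coprime p n"
    using assms(3) by (auto simp: coprime_mult_right_iff)
  have odd_H: "odd c" if "c \<in> ?H" for c
    using that assms(1) by (auto simp: half_totatives_def)
  have "(\<Prod>c\<in>?H. \<psi> c) = (\<Prod>c\<in>?H. \<psi> (abs_least_residue n (p * c)))"
    by (rule prod.reindex_bij_betw[symmetric])
      (rule bij_betw_abs_least_residue_mult[OF \<open>coprime p n\<close> assms(2)])
  also have "\<dots> = (\<Prod>c\<in>?H. residue_sign (2 * n) (p * c) * (\<psi> p * \<psi> c))"
    using assms(1,2) \<open>odd p\<close> odd_H
    by (intro prod.cong refl) (simp add: character_residue_sign periodic reflect odd_fun mult)
  also have "\<dots> = (-1) ^ ?\<nu> * \<psi> p ^ card ?H * (\<Prod>c\<in>?H. \<psi> c)"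
    by (simp add: prod.distrib prod_residue_sign)
  finally have "1 * (\<Prod>c\<in>?H. \<psi> c) = (-1) ^ ?\<nu> * \<psi> p ^ card ?H * (\<Prod>c\<in>?H. \<psi> c)"
    by simp
  moreover have "(\<Prod>c\<in>?H. \<psi> c) \<noteq> 0"
    using odd_H nonzero by simp
  ultimately have "(-1) ^ ?\<nu> * \<psi> p ^ card ?H = 1"
    by (metis mult_cancel_right)
  then have "(-1) ^ ?\<nu> * ((-1) ^ ?\<nu> * \<psi> p ^ card ?H) = (-1) ^ ?\<nu>"
    by simp
  then show ?thesis
    by (simp only: mult.assoc[symmetric] minus_one_mult_self mult_1_left)
qed

lemma even_half_floor_sum_double_iff:
  fixes \<psi> :: "int \<Rightarrow> int"
  assumes "even n" "n > 2" "coprime p (2 * n)" "p > 0"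
    and "\<And>x y. odd x \<Longrightarrow> odd y \<Longrightarrow> \<psi> (x * y) = \<psi> x * \<psi> y"
    and "\<And>x. \<psi> (x mod (2 * n)) = \<psi> x"
    and "\<And>x. odd x \<Longrightarrow> \<psi> (n - x) = \<psi> x"
    and "\<And>x. odd x \<Longrightarrow> \<psi> (- x) = - \<psi> x"
    and "\<And>x. odd x \<Longrightarrow> \<psi> x \<noteq> 0"
  shows "even (half_floor_sum (2 * n) p) \<longleftrightarrow>
           ((-1) ^ nat ((p - 1) div 2) * \<psi> p) ^ card (half_totatives n) = 1"
proof -
  let ?k = "card (half_totatives n)" and ?t = "nat ((p - 1) div 2)"
    and ?\<nu> = "card {c \<in> half_totatives n. 2 * n < 2 * ((p * c) mod (2 * n))}"
  have "odd p"
    using assms(3) by (auto simp: coprime_mult_right_iff)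
  have "half_floor_sum (2 * n) p = int ?k * ((p - 1) div 2) - int ?\<nu>"
    using assms(1,2) \<open>odd p\<close> by (rule half_floor_sum_double)
  moreover have "int ?k * ((p - 1) div 2) = int (?t * ?k)"
    using assms(4) by simp
  ultimately have "half_floor_sum (2 * n) p = int (?t * ?k) - int ?\<nu>"
    by simp
  then have "even (half_floor_sum (2 * n) p) \<longleftrightarrow> even (?t * ?k + ?\<nu>)"
    by (simp only: even_diff of_nat_add[symmetric] even_of_nat_iff)
  also have "\<dots> \<longleftrightarrow> (-1::int) ^ (?t * ?k + ?\<nu>) = 1"
    by (simp add: minus_one_power_iff)
  also have "(-1::int) ^ (?t * ?k + ?\<nu>) = ((-1) ^ ?t * \<psi> p) ^ ?k"
    using character_pow_card_half_totatives[OF assms(1-3,5-9)]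
    by (simp add: power_add power_mult power_mult_distrib)
  finally show ?thesis .
qed

text \<open>The Kronecker symbols (-4/x) and (-8/x); their values at even x are never used.\<close>

definition chi_minus4 :: "int \<Rightarrow> int" where
  "chi_minus4 x = (if x mod 4 = 1 then 1 else -1)"

definition chi_minus8 :: "int \<Rightarrow> int" where
  "chi_minus8 x = (if x mod 8 = 1 \<or> x mod 8 = 3 then 1 else -1)"

lemma chi_minus4_mult: "odd x \<Longrightarrow> odd y \<Longrightarrow> chi_minus4 (x * y) = chi_minus4 x * chi_minus4 y"
proof -
  have residues: "z mod 4 = 1 \<or> z mod 4 = 3" if "odd z" for z :: int
    using that by presburger
  assume "odd x" "odd y"
  then have "x mod 4 \<in> {1, 3}" "y mod 4 \<in> {1, 3}"
    using residues by auto
  moreover have "(x * y) mod 4 = (x mod 4) * (y mod 4) mod 4"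
    by (simp add: mod_mult_eq)
  ultimately show ?thesis
    by (auto simp: chi_minus4_def)
qed

lemma chi_minus8_mult: "odd x \<Longrightarrow> odd y \<Longrightarrow> chi_minus8 (x * y) = chi_minus8 x * chi_minus8 y"
proof -
  have residues: "z mod 8 = 1 \<or> z mod 8 = 3 \<or> z mod 8 = 5 \<or> z mod 8 = 7" if "odd z" for z :: int
    using that by presburger
  assume "odd x" "odd y"
  then have "x mod 8 \<in> {1, 3, 5, 7}" "y mod 8 \<in> {1, 3, 5, 7}"
    using residues by auto
  moreover have "(x * y) mod 8 = (x mod 8) * (y mod 8) mod 8"
    by (simp add: mod_mult_eq)
  ultimately show ?thesis
    by (auto simp: chi_minus8_def)
qed

lemma even_half_floor_sum_4_mult:
  assumes "odd m" "m > 1" "odd p" "coprime p m" "p > 0"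
  shows "even (half_floor_sum (4 * m) p)"
proof -
  have "even (half_floor_sum (2 * (2 * m)) p) \<longleftrightarrow>
      ((-1) ^ nat ((p - 1) div 2) * chi_minus4 p) ^ card (half_totatives (2 * m)) = 1"
  proof (rule even_half_floor_sum_double_iff)
    show "coprime p (2 * (2 * m))"
      using coprime_power_right_iff[of p 2 2] assms(3,4) by simp
    show "chi_minus4 (x mod (2 * (2 * m))) = chi_minus4 x" for x
      by (simp add: chi_minus4_def mod_mod_cancel)
    show "chi_minus4 (2 * m - x) = chi_minus4 x" if "odd x" for x
      using that assms(1) unfolding chi_minus4_def by presburger
    show "chi_minus4 (- x) = - chi_minus4 x" if "odd x" for x
      using that unfolding chi_minus4_def by presburger
    show "chi_minus4 (x * y) = chi_minus4 x * chi_minus4 y" if "odd x" "odd y" for x y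
      using that by (rule chi_minus4_mult)
    show "chi_minus4 x \<noteq> 0" for x
      by (simp add: chi_minus4_def)
  qed (use assms in simp_all)
  moreover have "(-1) ^ nat ((p - 1) div 2) = chi_minus4 p"
    using assms(3,5) by (simp add: chi_minus4_def minus_one_power_iff even_nat_iff) presburger
  moreover have "chi_minus4 p * chi_minus4 p = 1"
    by (simp add: chi_minus4_def)
  ultimately show ?thesis
    by simp
qed

lemma even_half_floor_sum_8_mult:
  assumes "odd k" "k > 1" "odd p" "coprime p k" "p > 0"
  shows "even (half_floor_sum (8 * k) p)"
proof -
  have iff: "even (half_floor_sum (2 * (4 * k)) p) \<longleftrightarrow>
      ((-1) ^ nat ((p - 1) div 2) * chi_minus8 p) ^ card (half_totatives (4 * k)) = 1"
  proof (rule even_half_floor_sum_double_iff)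
    show "coprime p (2 * (4 * k))"
      using coprime_power_right_iff[of p 2 3] assms(3,4) by simp
    show "chi_minus8 (x mod (2 * (4 * k))) = chi_minus8 x" for x
      by (simp add: chi_minus8_def mod_mod_cancel)
    show "chi_minus8 (4 * k - x) = chi_minus8 x" if "odd x" for x
      using that assms(1) unfolding chi_minus8_def by presburger
    show "chi_minus8 (- x) = - chi_minus8 x" if "odd x" for x
      using that unfolding chi_minus8_def by presburger
    show "chi_minus8 (x * y) = chi_minus8 x * chi_minus8 y" if "odd x" "odd y" for x y
      using that by (rule chi_minus8_mult)
    show "chi_minus8 x \<noteq> 0" for x
      by (simp add: chi_minus8_def)
  qed (use assms in simp_all)
  have card: "card (half_totatives (4 * k)) = totient (nat k)"
  proof -
    have "nat (4 * k) = 2 * (2 * nat k)"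
      by simp
    moreover have "totient (2 * (2 * nat k)) = 2 * totient (2 * nat k)"
      by (subst totient_double) simp
    moreover have "totient (2 * nat k) = totient (nat k)"
      using assms(1,2) by (subst totient_double) (simp add: even_nat_iff)
    ultimately have "totient (nat (4 * k)) = 2 * totient (nat k)"
      by (simp only:)
    then show ?thesis
      using card_half_totatives[of "4 * k"] assms(2) by simp
  qed
  have "even (totient (nat k))"
    using assms(1,2) by (intro totient_even) (auto elim!: oddE)
  then obtain s where s: "totient (nat k) = 2 * s"
    by (rule evenE)
  have "((-1) ^ nat ((p - 1) div 2) * chi_minus8 p) ^ 2 = 1"
    by (simp add: chi_minus8_def power_mult_distrib flip: power_mult)
  then show ?thesis
    using iff card s by (simp add: power_mult)
qed

lemma half_totatives_8: "half_totatives 8 = {1, 3}"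
proof (intro equalityI subsetI)
  fix c :: int
  assume "c \<in> half_totatives 8"
  then have c: "0 < c" "2 * c < 8" "coprime c 8"
    by (simp_all add: half_totatives_def)
  then have "c = 1 \<or> c = 2 \<or> c = 3"
    by arith
  then show "c \<in> {1, 3}"
    using c(3) by auto
next
  fix c :: int
  assume "c \<in> {1, 3}"
  moreover have "coprime (3::int) 8"
    using coprime_power_right_iff[of "3::int" 2 3] by simp
  ultimately show "c \<in> half_totatives 8"
    by (auto simp: half_totatives_def)
qed

lemma even_half_floor_sum_8_iff:
  assumes "odd p"
  shows "even (half_floor_sum 8 p) \<longleftrightarrow> p mod 8 = 1 \<or> p mod 8 = 7"
proof -
  have "3 * p = 3 * (p mod 8) + 8 * (3 * (p div 8))"
    using div_mult_mod_eq[of p 8] by linarith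
  then have "half_floor_sum 8 p = 2 * (2 * (p div 8)) + 3 * (p mod 8) div 8"
    by (simp add: half_floor_sum_def half_totatives_8)
  moreover have "p mod 8 = 1 \<or> p mod 8 = 3 \<or> p mod 8 = 5 \<or> p mod 8 = 7"
    using assms by presburger
  ultimately show ?thesis
    by auto
qed

section \<open>Legendre symbols\<close>

lemma abs_Legendre_le_1: "\<bar>Legendre a p\<bar> \<le> 1"
  by (simp add: Legendre_def)

lemma euler_criterion_int:
  fixes p :: int
  assumes "prime p" "p > 2"
  shows "[Legendre a p = a ^ nat ((p - 1) div 2)] (mod p)"
proof -
  have "[Legendre a (int (nat p)) = a ^ ((nat p - 1) div 2)] (mod int (nat p))"
    using assms by (intro euler_criterion) simp_all
  moreover have "(nat p - 1) div 2 = nat ((p - 1) div 2)"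
    using assms by (simp add: nat_div_distrib nat_diff_distrib)
  ultimately show ?thesis
    using assms by simp
qed

lemma Legendre_mult:
  fixes p :: int
  assumes "prime p" "p > 2"
  shows "Legendre (a * b) p = Legendre a p * Legendre b p"
proof (rule cong_abs_le_1_imp_eq)
  show "\<bar>Legendre a p * Legendre b p\<bar> \<le> 1"
    using abs_Legendre_le_1[of a p] abs_Legendre_le_1[of b p]
    by (simp add: abs_mult mult_le_one)
  have "[Legendre a p * Legendre b p = a ^ nat ((p - 1) div 2) * b ^ nat ((p - 1) div 2)] (mod p)"
    using assms by (intro cong_mult euler_criterion_int)
  then show "[Legendre (a * b) p = Legendre a p * Legendre b p] (mod p)"
    using euler_criterion_int[OF assms, of "a * b"]
    by (metis cong_sym cong_trans power_mult_distrib)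
qed (use assms in \<open>simp_all add: abs_Legendre_le_1\<close>)

lemma Legendre_eq_1_or_minus_1:
  fixes p :: int
  assumes "prime p" "\<not> p dvd a"
  shows "Legendre a p = 1 \<or> Legendre a p = -1"
  using assms by (auto simp: Legendre_def cong_0_iff)

lemma Legendre_8:
  fixes p :: int
  assumes "prime p" "p > 2"
  shows "Legendre 8 p = Legendre 2 p"
proof -
  have "Legendre 8 p = Legendre 2 p * (Legendre 2 p * Legendre 2 p)"
    using Legendre_mult[OF assms] by (metis mult_2 numeral_Bit0)
  moreover have "\<not> p dvd 2"
    using assms(2) by (auto dest: zdvd_imp_le)
  ultimately show ?thesis
    using Legendre_eq_1_or_minus_1[OF assms(1), of 2] by auto
qed

lemma Legendre_swap_if_1_mod_4:
  fixes p q :: int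
  assumes "prime p" "prime q" "p > 2" "q mod 4 = 1" "p \<noteq> q"
  shows "Legendre q p = Legendre p q"
proof -
  have "q > 2"
    using assms(2,4) prime_ge_2_int[of q] by (cases "q = 2") auto
  then have "Legendre p q * Legendre q p = (-1) ^ nat ((p - 1) div 2 * ((q - 1) div 2))"
    using assms by (intro Quadratic_Reciprocity_int) simp_all
  also have "\<dots> = 1"
  proof -
    have "even ((q - 1) div 2)"
      using assms(4) by presburger
    moreover have "0 \<le> (p - 1) div 2 * ((q - 1) div 2)"
      using assms(3) \<open>q > 2\<close> by simp
    ultimately show ?thesis
      by (simp add: even_nat_iff)
  qed
  finally have "Legendre p q * Legendre q p = 1" .
  moreover have "\<not> q dvd p" "\<not> p dvd q"
    using assms primes_dvd_imp_eq by blast+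
  ultimately show ?thesis
    using Legendre_eq_1_or_minus_1[OF assms(2), of p] Legendre_eq_1_or_minus_1[OF assms(1), of q]
    by auto
qed

lemma Legendre_2:
  fixes p :: int
  assumes "prime p" "p > 2"
  shows "Legendre 2 p = (if p mod 8 = 1 \<or> p mod 8 = 7 then 1 else -1)"
proof -
  define h where "h = (p - 1) div 2"
  have "odd p"
    using assms prime_odd_int by blast
  interpret GAUSS "nat p" 2
    using assms by unfold_locales (auto simp: cong_0_iff zdvd_not_zless)
  have "E = (\<lambda>x. x * 2) ` {h div 2<..h}"
  proof -
    have "(x * 2) mod p = x * 2" if "x \<in> {0<..h}" for x
      using that \<open>odd p\<close> assms(2) by (intro mod_pos_pos_trivial) (auto simp: h_def)
    then have "C = (\<lambda>x. x * 2) ` {0<..h}"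
      using assms(2) by (auto simp: C_def B_def A_def h_def image_image)
    moreover have "(\<lambda>x. x * 2) ` {0<..h} \<inter> {h<..} = (\<lambda>x. x * 2) ` {h div 2<..h}"
      using assms(2) by (auto simp: h_def image_iff)
    ultimately show ?thesis
      using assms(2) by (simp add: E_def h_def)
  qed
  then have "card E = nat (h - h div 2)"
    by (simp add: card_image inj_on_def)
  then have "Legendre 2 p = (-1) ^ nat (h - h div 2)"
    using gauss_lemma assms(2) by simp
  moreover have "even (nat (h - h div 2)) \<longleftrightarrow> p mod 8 = 1 \<or> p mod 8 = 7"
    using \<open>odd p\<close> assms(2) unfolding h_def by (subst even_nat_iff) presburger+
  ultimately show ?thesis
    by (simp add: minus_one_power_iff)
qed

section \<open>Kronecker symbols\<close>

lemma prod_power_int_eq_power_int_sum: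
  fixes x :: "'a::field"
  assumes "x \<noteq> 0"
  shows "(\<Prod>a\<in>A. x powi f a) = x powi (\<Sum>a\<in>A. f a)"
proof (induction A rule: infinite_finite_induct)
  case (insert a A)
  then show ?case
    using assms by (simp add: power_int_add)
qed simp_all

lemma kronecker_eq_0_if_not_coprime:
  fixes c d :: int
  assumes "c > 0" "\<not> coprime c d"
  shows "kronecker d c = 0"
proof -
  obtain q where q: "prime q" "q dvd c" "q dvd d"
    using assms(2) prime_divisor_exists[of "gcd c d"] assms(1)
    by (auto simp: coprime_iff_gcd_eq_1 dest: dvd_trans)
  have "kronecker_prime d q = 0"
    using q(3) by (cases "q = 2") (auto simp: kronecker_prime_def Legendre_def cong_0_iff)
  moreover have "q \<in># prime_factorization c"
    using q(1,2) assms(1) by (simp add: in_prime_factors_iff)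
  ultimately show ?thesis
    unfolding kronecker_def by (metis image_eqI prod_mset_zero_iff set_image_mset)
qed

lemma odd_prod_mset: "(\<And>x. x \<in># M \<Longrightarrow> odd (x::int)) \<Longrightarrow> odd (prod_mset M)"
  by (induction M) auto

lemma odd_kronecker_if_coprime:
  fixes c d :: int
  assumes "coprime c d"
  shows "odd (kronecker d c)"
proof -
  have "odd (kronecker_prime d q)" if "q \<in># prime_factorization c" for q
  proof -
    have "prime q" "q dvd c"
      using that by (auto simp: in_prime_factors_iff)
    then have "\<not> q dvd d"
      using assms by (meson coprime_common_divisor not_prime_unit)
    then show ?thesis
      by (auto simp: kronecker_prime_def Legendre_def cong_0_iff)
  qed
  then show ?thesis
    unfolding kronecker_def by (intro odd_prod_mset) auto
qed

lemma even_sum_div_mult_kronecker_iff: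
  fixes d p :: int
  shows "even (\<Sum>c | 0 < c \<and> 2 * c < d. (p * c) div d * kronecker d c) \<longleftrightarrow>
         even (half_floor_sum d p)"
proof -
  define S where "S = {c::int. 0 < c \<and> 2 * c < d}"
  have "finite S"
    by (auto simp: S_def intro: finite_subset[of _ "{0..d}"])
  then have "half_floor_sum d p = (\<Sum>c\<in>S. if coprime c d then (p * c) div d else 0)"
    by (simp add: half_floor_sum_def half_totatives_def S_def sum.inter_filter[symmetric] conj_assoc)
  then have "(\<Sum>c\<in>S. (p * c) div d * kronecker d c) - half_floor_sum d p =
      (\<Sum>c\<in>S. (p * c) div d * kronecker d c - (if coprime c d then (p * c) div d else 0))"
    by (simp add: sum_subtractf)
  also have "even \<dots>"
  proof (intro dvd_sum)
    fix c assume "c \<in> S"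
    then have "c > 0"
      by (simp add: S_def)
    show "even ((p * c) div d * kronecker d c - (if coprime c d then (p * c) div d else 0))"
    proof (cases "coprime c d")
      case True
      then have "even ((p * c) div d * (kronecker d c - 1))"
        using odd_kronecker_if_coprime by simp
      then show ?thesis
        using True by (simp add: algebra_simps)
    next
      case False
      then show ?thesis
        using kronecker_eq_0_if_not_coprime \<open>c > 0\<close> by simp
    qed
  qed
  finally show ?thesis
    by (simp add: S_def)
qed

lemma prod_minus_one_powi_floor_kronecker:
  fixes d p :: int
  shows "(\<Prod>c\<in>{c::int. 0 < c \<and> real_of_int c < real_of_int d / 2}.
            (-1::real) powi (\<lfloor>real_of_int (p * c) / real_of_int d\<rfloor> * kronecker d c))
         = (if even (half_floor_sum d p) then 1 else -1)"
proof -
  have "{c::int. 0 < c \<and> real_of_int c < real_of_int d / 2} = {c. 0 < c \<and> 2 * c < d}"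
    by auto
  then have "(\<Prod>c\<in>{c::int. 0 < c \<and> real_of_int c < real_of_int d / 2}.
            (-1::real) powi (\<lfloor>real_of_int (p * c) / real_of_int d\<rfloor> * kronecker d c))
        = (\<Prod>c | 0 < c \<and> 2 * c < d. (-1::real) powi ((p * c) div d * kronecker d c))"
    by (simp only: floor_divide_of_int_eq)
  also have "\<dots> = (-1) powi (\<Sum>c | 0 < c \<and> 2 * c < d. (p * c) div d * kronecker d c)"
    by (rule prod_power_int_eq_power_int_sum) simp
  also have "\<dots> = (if even (half_floor_sum d p) then 1 else -1)"
    using even_sum_div_mult_kronecker_iff[where d = d and p = p] by (simp add: power_int_minus_left)
  finally show ?thesis .
qed

section \<open>Real quadratic discriminants\<close>

lemma Legendre_8_eq_sign_half_floor_sum: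
  fixes p :: int
  assumes "prime p" "p > 2"
  shows "Legendre 8 p = (if even (half_floor_sum 8 p) then 1 else -1)"
  using Legendre_8[OF assms] Legendre_2[OF assms] even_half_floor_sum_8_iff prime_odd_int[OF assms]
  by simp

lemma Legendre_eq_sign_half_floor_sum:
  fixes d p :: int
  assumes "prime d" "d mod 4 = 1" "prime p" "p > 2" "p \<noteq> d"
  shows "Legendre d p = (if even (half_floor_sum d p) then 1 else -1)"
proof -
  have "d > 2"
    using assms(1,2) prime_ge_2_int[of d] by (cases "d = 2") auto
  have "odd d" "odd p"
    using assms(2-4) prime_odd_int by presburger+
  have "coprime p d"
    using assms(1,3,5) by (simp add: primes_coprime)
  have "2 * card (half_totatives d) = nat d - 1"
    using card_half_totatives[of d] \<open>d > 2\<close> assms(1) by (simp add: totient_prime)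
  then have "card (half_totatives d) = nat ((d - 1) div 2)"
    by linarith
  then have "[Legendre p d = p ^ card (half_totatives d)] (mod d)"
    using euler_criterion_int[OF assms(1) \<open>d > 2\<close>] by simp
  also have "[p ^ card (half_totatives d) = (if even (half_floor_sum d p) then 1 else -1)] (mod d)"
    using \<open>coprime p d\<close> \<open>d > 2\<close> \<open>odd d\<close> \<open>odd p\<close> by (rule cong_pow_card_half_totatives)
  finally have "Legendre p d = (if even (half_floor_sum d p) then 1 else -1)"
    using \<open>d > 2\<close> by (intro cong_abs_le_1_imp_eq) (simp_all add: abs_Legendre_le_1)
  then show ?thesis
    using Legendre_swap_if_1_mod_4[OF assms(3,1,4,2,5)] by simp
qed

lemma real_quad_disc_cases:
  assumes "real_quad_disc d"
  obtains (odd) "d mod 4 = 1" "squarefree d" "d > 1"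
    | (four) m where "d = 4 * m" "odd m" "m > 1"
    | (eight) k where "d = 8 * k" "odd k" "k > 0"
proof -
  have "d > 1"
    using assms by (simp add: real_quad_disc_def)
  consider "d mod 4 = 1" "squarefree d" | "d = 4 * (d div 4)" "d div 4 mod 4 \<in> {2, 3}"
    using assms by (auto simp: real_quad_disc_def)
  then show ?thesis
  proof cases
    case 2
    define m where "m = d div 4"
    have "d = 4 * m" "m > 0"
      using 2(1) \<open>d > 1\<close> by (simp_all add: m_def)
    show ?thesis
    proof (cases "m mod 4 = 3")
      case True
      then have "odd m" "m > 1"
        using \<open>m > 0\<close> by presburger+
      then show ?thesis
        using four \<open>d = 4 * m\<close> by blast
    next
      case False
      then have "m = 2 * (m div 2)" "odd (m div 2)"
        using 2(2) by (simp_all add: m_def) presburger+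
      moreover have "m div 2 > 0"
        using \<open>m > 0\<close> \<open>m = 2 * (m div 2)\<close> by linarith
      ultimately show ?thesis
        using eight[of "m div 2"] \<open>d = 4 * m\<close> by simp
    qed
  qed (use odd \<open>d > 1\<close> in blast)
qed

lemma sign_half_floor_sum_eq_Legendre_power:
  fixes d p :: int
  assumes "real_quad_disc d" "prime p" "odd p" "\<not> p dvd d"
  shows "(if even (half_floor_sum d p) then 1 else -1) = Legendre d p ^ (if d = 8 \<or> prime d then 1 else 0)"
proof -
  have "p > 2"
    using assms(2,3) prime_ge_2_int[of p] by (cases "p = 2") auto
  have "coprime p d"
    using assms(2,4) by (simp add: prime_imp_coprime)
  have "d mod 4 = 1" if "prime d"
  proof (rule ccontr)
    assume "d mod 4 \<noteq> 1"
    then have "d mod 4 = 0" "d > 1"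
      using assms(1) by (auto simp: real_quad_disc_def)
    then have "even d" "d > 2"
      by presburger+
    then show False
      using prime_odd_int[OF that] by simp
  qed
  moreover have "p \<noteq> d"
    using assms(4) by auto
  ultimately have "Legendre d p = (if even (half_floor_sum d p) then 1 else -1)" if "d = 8 \<or> prime d"
    using that Legendre_8_eq_sign_half_floor_sum[OF assms(2) \<open>p > 2\<close>]
      Legendre_eq_sign_half_floor_sum[OF _ _ assms(2) \<open>p > 2\<close>] by auto
  moreover have "even (half_floor_sum d p)" if "d \<noteq> 8" "\<not> prime d"
    using assms(1)
  proof (cases rule: real_quad_disc_cases)
    case odd
    moreover from this have "odd d"
      by presburger
    ultimately show ?thesis
      using even_half_floor_sum_squarefree_nonprime \<open>\<not> prime d\<close> \<open>coprime p d\<close> assms(3) by blast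
  next
    case (four m)
    then show ?thesis
      using even_half_floor_sum_4_mult \<open>coprime p d\<close> assms(3) \<open>p > 2\<close> by simp
  next
    case (eight k)
    moreover from this have "k > 1"
      using \<open>d \<noteq> 8\<close> by auto
    ultimately show ?thesis
      using even_half_floor_sum_8_mult \<open>coprime p d\<close> assms(3) \<open>p > 2\<close> by simp
  qed
  ultimately show ?thesis
    by auto
qed

theorem mainTheorem8:
  fixes d p :: int
  assumes "real_quad_disc d" and "prime p" and "odd p" and "\<not> p dvd d"
  shows "(\<Prod>c\<in>{c::int. 0 < c \<and> real_of_int c < real_of_int d / 2}.
            (-1::real) powi (\<lfloor>real_of_int (p * c) / real_of_int d\<rfloor> * kronecker d c))
         = real_of_int (Legendre d p) ^ (if d = 8 \<or> prime d then 1 else 0)"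
proof -
  have "real_of_int (if even (half_floor_sum d p) then 1 else -1) =
        real_of_int (Legendre d p ^ (if d = 8 \<or> prime d then 1 else 0))"
    using sign_half_floor_sum_eq_Legendre_power[OF assms] by (rule arg_cong)
  then show ?thesis
    unfolding prod_minus_one_powi_floor_kronecker
    by (simp only: of_int_power if_distrib[of real_of_int] of_int_1 of_int_minus)
qed

end
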